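(* Let $\{\mathcal{F}_n\}_{n\ge0}$ be a filtration of sub-$\sigma$-fields of $\mathcal{F}$, let $X\in L^\infty$, and let $\{X_n\}_{n\ge0}$ be a sequence with $X_n\in\mathbb{E}[X\mid\mathcal{F}_n]$ for all $n$ (a martingale). If $T$ is a stopping time with values in $\{0,1,2,\dots\}$, then $X_T:=\sum_n\mathbf{1}\{T=n\}X_n\in\mathbb{E}[X\mid\mathcal{F}_T]$.
   Context: $\mathbb{K}$ is a local field with non-archimedean absolute value $|\cdot|$ satisfying $|x|=0 \iff x=0$, $|xy|=|x||y|$, $|x+y|\le|x|\vee|y|$. $(\Omega,\mathcal{F},\mathbb{P})$ is a probability space; all (in)equalities are a.s. $L^\infty$ is the space of $\mathbb{K}$-valued random variables $X$ with $\operatorname{ess\,sup}|X|<\infty$; $L^\infty(\mathcal{G})$ its $\mathcal{G}$-measurable subspace. For a non-negative real random variable $S$, $\operatorname{ess\,sup}\{S\mid\mathcal{G}\}:=\sup_{p\ge1}\mathbb{E}[S^p\mid\mathcal{G}]^{1/p}$ (usual real conditional expectation), $\|X\|_\mathcal{G}:=\operatorname{ess\,sup}\{|X|\mid\mathcal{G}\}$, and the conditional expectation is the set $\mathbb{E}[X\mid\mathcal{G}]:=\{Y\in L^\infty(\mathcal{G}): \|X-Y\|_\mathcal{G}\le\|X-Z\|_\mathcal{G}\text{ for all }Z\in L^\infty(\mathcal{G})\}$. A stopping time satisfies $\{T=n\}\in\mathcal{F}_n$ for all $n$; $\mathcal{F}_T$ is the $\sigma$-field of events $A$ with $A\cap\{T=n\}\in\mathcal{F}_n$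 for all $n$. $\mathbf{1}\{T=n\}$ is the $\mathbb{K}$-valued indicator ($1_\mathbb{K}$ on the event, $0_\mathbb{K}$ off it). *)

theory Defs
  imports "HOL-Probability.Probability"
begin

definition nonarch_abs :: "('k::field \<Rightarrow> real) \<Rightarrow> bool" where
  "nonarch_abs av \<longleftrightarrow>
     (\<forall>x. 0 \<le> av x) \<and> (\<forall>x. av x = 0 \<longleftrightarrow> x = 0) \<and>
     (\<forall>x y. av (x * y) = av x * av y) \<and>
     (\<forall>x y. av (x + y) \<le> max (av x) (av y))"

text \<open>Local field: nontrivial non-archimedean absolute value whose closed unit ball is
  (sequentially) compact for the metric d(x,y) = av(x - y), i.e. the field is locally compact
  and non-discrete.\<close>
definition nonarch_local_field :: "('k::field \<Rightarrow> real) \<Rightarrow> bool" where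
  "nonarch_local_field av \<longleftrightarrow> nonarch_abs av \<and> (\<exists>x. 0 < av x \<and> av x < 1) \<and>
     (\<forall>s::nat \<Rightarrow> 'k. (\<forall>n. av (s n) \<le> 1) \<longrightarrow>
        (\<exists>r l. strict_mono r \<and> av l \<le> 1 \<and> (\<lambda>n. av (s (r n) - l)) \<longlonglongrightarrow> 0))"

text \<open>Borel sigma-algebra of the field (generated by the open balls; the field is separable).\<close>
definition kborel :: "('k::field \<Rightarrow> real) \<Rightarrow> 'k measure" where
  "kborel av = sigma UNIV {{y. av (y - x) < r} | x r. True}"

definition Linf :: "'a measure \<Rightarrow> 'a measure \<Rightarrow> ('k::field \<Rightarrow> real) \<Rightarrow> ('a \<Rightarrow> 'k) set" where
  "Linf M G av = {Y. Y \<in> measurable G (kborel av) \<and> (\<exists>C. AE \<omega> in M. av (Y \<omega>) \<le> C)}"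

definition cond_esssup :: "'a measure \<Rightarrow> 'a measure \<Rightarrow> ('a \<Rightarrow> real) \<Rightarrow> 'a \<Rightarrow> ennreal" where
  "cond_esssup M G S \<omega> =
     (SUP p\<in>{1::nat..}. ennreal (real_cond_exp M G (\<lambda>x. S x ^ p) \<omega> powr (1 / real p)))"

definition cond_norm :: "'a measure \<Rightarrow> 'a measure \<Rightarrow> ('k::field \<Rightarrow> real) \<Rightarrow> ('a \<Rightarrow> 'k) \<Rightarrow> 'a \<Rightarrow> ennreal" where
  "cond_norm M G av X = cond_esssup M G (\<lambda>\<omega>. av (X \<omega>))"

definition kcond_exp :: "'a measure \<Rightarrow> 'a measure \<Rightarrow> ('k::field \<Rightarrow> real) \<Rightarrow> ('a \<Rightarrow> 'k) \<Rightarrow> ('a \<Rightarrow> 'k) set" where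
  "kcond_exp M G av X = {Y \<in> Linf M G av.
     \<forall>Z \<in> Linf M G av. AE \<omega> in M.
        cond_norm M G av (\<lambda>x. X x - Y x) \<omega> \<le> cond_norm M G av (\<lambda>x. X x - Z x) \<omega>}"

definition filtration :: "'a measure \<Rightarrow> (nat \<Rightarrow> 'a measure) \<Rightarrow> bool" where
  "filtration M F \<longleftrightarrow> (\<forall>n. subalgebra M (F n)) \<and> (\<forall>n m. n \<le> m \<longrightarrow> sets (F n) \<subseteq> sets (F m))"

definition stopping_time_nat :: "'a measure \<Rightarrow> (nat \<Rightarrow> 'a measure) \<Rightarrow> ('a \<Rightarrow> nat) \<Rightarrow> bool" where
  "stopping_time_nat M F T \<longleftrightarrow> (\<forall>n. {\<omega> \<in> space M. T \<omega> = n} \<in> sets (F n))"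

definition stopped_sigma :: "'a measure \<Rightarrow> (nat \<Rightarrow> 'a measure) \<Rightarrow> ('a \<Rightarrow> nat) \<Rightarrow> 'a measure" where
  "stopped_sigma M F T = sigma (space M)
     {A \<in> sets M. \<forall>n. A \<inter> {\<omega> \<in> space M. T \<omega> = n} \<in> sets (F n)}"

end

theory Submission
  imports Defs
begin

text \<open>Write \<open>\<parallel>.\<parallel>\<^sub>G\<close> for the conditional essential supremum and \<open>L\<^sub>n = {T = n}\<close>. The level
  \<open>L\<^sub>n\<close> lies in both \<open>\<F>\<^sub>n\<close> and \<open>\<F>\<^sub>T\<close>, and an \<open>\<F>\<^sub>T\<close>-event meets \<open>L\<^sub>n\<close> in an \<open>\<F>\<^sub>n\<close>-event; hence on
  \<open>L\<^sub>n\<close> every real conditional expectation given \<open>\<F>\<^sub>T\<close> coincides with the one given \<open>\<F>\<^sub>n\<close>,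
  and so do the conditional sup-norms. For a competitor \<open>Z \<in> L\<^sup>\<infinity>(\<F>\<^sub>T)\<close> the variable
  \<open>Z \<one>{T = n}\<close> is an \<open>\<F>\<^sub>n\<close>-competitor, and locality on \<open>L\<^sub>n\<close> gives there
  \<open>\<parallel>X - X\<^sub>T\<parallel>\<^sub>\<F>\<^sub>T = \<parallel>X - X\<^sub>n\<parallel>\<^sub>\<F>\<^sub>n \<le> \<parallel>X - Z \<one>{T = n}\<parallel>\<^sub>\<F>\<^sub>n = \<parallel>X - Z\<parallel>\<^sub>\<F>\<^sub>T\<close>.
  For \<open>X\<^sub>T\<close> to be essentially bounded the \<open>X\<^sub>n\<close> need a common bound: by the ultrametric
  inequality \<open>|X - X\<^sub>n| = |X\<^sub>n|\<close> wherever \<open>|X\<^sub>n| > ess sup |X|\<close>, so minimality against the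
  competitor \<open>0\<close> makes this event null.\<close>

section \<open>Non-archimedean absolute values\<close>

locale ultrametric_abs =
  fixes av :: "'k::field \<Rightarrow> real"
  assumes nonarch: "nonarch_abs av"
begin

lemma av_nonneg [simp]: "0 \<le> av x"
  using nonarch unfolding nonarch_abs_def by blast

lemma av_eq_0_iff [simp]: "av x = 0 \<longleftrightarrow> x = 0"
  using nonarch unfolding nonarch_abs_def by blast

lemma av_zero [simp]: "av 0 = 0"
  by simp

lemma av_mult: "av (x * y) = av x * av y"
  using nonarch unfolding nonarch_abs_def by blast

lemma av_add_le_max: "av (x + y) \<le> max (av x) (av y)"
  using nonarch unfolding nonarch_abs_def by blast

lemma av_one [simp]: "av 1 = 1"
  using av_mult[of 1 1] by (metis av_eq_0_iff mult_cancel_left1 one_neq_zero)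

lemma av_minus [simp]: "av (- x) = av x"
proof -
  have "av (- x) ^ 2 = av x ^ 2"
    using av_mult[of "- x" "- x"] av_mult[of x x] by (simp add: power2_eq_square)
  then show ?thesis by simp
qed

lemma av_diff_commute: "av (x - y) = av (y - x)"
  by (metis av_minus minus_diff_eq)

lemma av_diff_le_max: "av (x - y) \<le> max (av x) (av y)"
  using av_add_le_max[of x "- y"] by simp

lemma av_diff_triangle: "av (x - z) \<le> max (av (x - y)) (av (y - z))"
  using av_add_le_max[of "x - y" "y - z"] by simp

lemma av_diff_eq_right:
  assumes "av x < av y"
  shows "av (x - y) = av y"
proof (rule antisym)
  show "av (x - y) \<le> av y"
    using av_diff_le_max[of x y] assms by simp
  show "av y \<le> av (x - y)"
    using av_diff_le_max[of x "x - y"] assms by (simp add: max_def split: if_splits)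
qed

lemma av_inverse: "av (inverse x) = inverse (av x)"
proof (cases "x = 0")
  case False
  then have "av (inverse x) * av x = 1"
    using av_mult[of "inverse x" x] by simp
  then show ?thesis by (metis inverse_unique mult.commute)
qed simp

lemma av_power: "av (x ^ n) = av x ^ n"
  by (induction n) (simp_all add: av_mult)

lemma av_power_mult_le_1:
  assumes "0 < av \<pi>" and "av \<pi> < 1"
  obtains k where "av (\<pi> ^ k * x) \<le> 1"
proof -
  have "0 < inverse (av x + 1)"
    by (simp add: add_nonneg_pos)
  then obtain k where k: "av \<pi> ^ k < inverse (av x + 1)"
    using real_arch_pow_inv assms by blast
  have "av (\<pi> ^ k * x) = av \<pi> ^ k * av x"
    by (simp add: av_mult av_power)
  also have "\<dots> \<le> inverse (av x + 1) * av x"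
    using k by (intro mult_right_mono) auto
  also have "\<dots> \<le> 1"
  proof -
    have "0 < 1 + av x"
      using av_nonneg[of x] by linarith
    then show ?thesis
      by (simp add: field_simps pos_divide_le_eq)
  qed
  finally show thesis
    by (rule that)
qed

lemma av_diff_less_iff_common_ball:
  assumes dense: "\<And>x r. 0 < r \<Longrightarrow> \<exists>q\<in>D. av (x - q) < r"
  shows "av (x - y) < a \<longleftrightarrow> (\<exists>q\<in>D. av (x - q) < a \<and> av (y - q) < a)"
proof
  assume xy: "av (x - y) < a"
  then obtain q where q: "q \<in> D" "av (x - q) < a"
    using dense le_less_trans[OF av_nonneg xy] by blast
  moreover have "av (y - q) < a"
    using av_diff_triangle[of y q x] xy q(2) av_diff_commute[of y x] by auto
  ultimately show "\<exists>q\<in>D. av (x - q) < a \<and> av (y - q) < a"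
    by blast
next
  assume "\<exists>q\<in>D. av (x - q) < a \<and> av (y - q) < a"
  then obtain q where "av (x - q) < a" "av (y - q) < a"
    by blast
  then show "av (x - y) < a"
    using av_diff_triangle[of x y q] av_diff_commute[of q y] by auto
qed

lemma av_diff_metric: "Metric_space UNIV (\<lambda>x y. av (x - y))"
proof
  fix x y z :: 'k
  show "av (x - y) = av (y - x)" by (rule av_diff_commute)
  show "av (x - z) \<le> av (x - y) + av (y - z)"
    using av_diff_triangle[of x z y] av_nonneg[of "x - y"] av_nonneg[of "y - z"] by linarith
qed auto

end

lemma nonarch_local_field_ultrametric_abs: "nonarch_local_field av \<Longrightarrow> ultrametric_abs av"
  by unfold_locales (simp add: nonarch_local_field_def)

lemma nonarch_local_field_unit_ball_mtotally_bounded: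
  fixes av :: "'k::field \<Rightarrow> real"
  assumes "nonarch_local_field av"
  shows "Metric_space.mtotally_bounded UNIV (\<lambda>x y. av (x - y)) {x. av x \<le> 1}"
proof -
  interpret ultrametric_abs av
    using assms by (rule nonarch_local_field_ultrametric_abs)
  interpret Metric_space UNIV "\<lambda>x y. av (x - y)"
    by (rule av_diff_metric)
  show ?thesis
    unfolding mtotally_bounded_sequentially
  proof (intro conjI allI impI)
    fix \<sigma> :: "nat \<Rightarrow> 'k"
    assume "range \<sigma> \<subseteq> {x. av x \<le> 1}"
    then obtain r l where r: "strict_mono r" and lim: "(\<lambda>n. av (\<sigma> (r n) - l)) \<longlonglongrightarrow> 0"
      using assms unfolding nonarch_local_field_def by blast
    have "MCauchy (\<sigma> \<circ> r)"
      unfolding MCauchy_def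
    proof (intro conjI allI impI)
      fix e :: real
      assume "0 < e"
      then obtain N where N: "\<And>n. N \<le> n \<Longrightarrow> av (\<sigma> (r n) - l) < e"
        using lim unfolding lim_sequentially dist_real_def by auto
      have "av (\<sigma> (r n) - \<sigma> (r n')) < e" if "N \<le> n" "N \<le> n'" for n n'
        using av_diff_triangle[of "\<sigma> (r n)" "\<sigma> (r n')" l] N[OF that(1)] N[OF that(2)]
          av_diff_commute[of l "\<sigma> (r n')"] by simp
      then show "\<exists>N. \<forall>n n'. N \<le> n \<longrightarrow> N \<le> n' \<longrightarrow> av ((\<sigma> \<circ> r) n - (\<sigma> \<circ> r) n') < e"
        by auto
    qed simp
    with r show "\<exists>r. strict_mono r \<and> MCauchy (\<sigma> \<circ> r)"
      by blast
  qed simp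
qed

lemma nonarch_local_field_separable:
  fixes av :: "'k::field \<Rightarrow> real"
  assumes "nonarch_local_field av"
  obtains D :: "'k set" where "countable D" and "\<And>x r. 0 < r \<Longrightarrow> \<exists>q\<in>D. av (x - q) < r"
proof -
  interpret ultrametric_abs av
    using assms by (rule nonarch_local_field_ultrametric_abs)
  interpret Metric_space UNIV "\<lambda>x y. av (x - y)"
    by (rule av_diff_metric)
  obtain \<pi> where \<pi>: "0 < av \<pi>" "av \<pi> < 1"
    using assms unfolding nonarch_local_field_def by auto
  then have "\<pi> \<noteq> 0"
    by auto
  have "\<forall>m::nat. \<exists>K. finite K \<and> {x. av x \<le> 1} \<subseteq> (\<Union>q\<in>K. mball q (inverse (Suc m)))"
  proof
    fix m :: nat
    show "\<exists>K. finite K \<and> {x. av x \<le> 1} \<subseteq> (\<Union>q\<in>K. mball q (inverse (Suc m)))"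
      using nonarch_local_field_unit_ball_mtotally_bounded[OF assms,
          unfolded mtotally_bounded_def, rule_format, of "inverse (Suc m)"] by auto
  qed
  then obtain K where "\<forall>m. finite (K m) \<and> {x. av x \<le> 1} \<subseteq> (\<Union>q\<in>K m. mball q (inverse (Suc m)))"
    by (rule choice[THEN exE]) blast
  then have K: "\<And>m. finite (K m)" "\<And>m. {x. av x \<le> 1} \<subseteq> (\<Union>q\<in>K m. mball q (inverse (Suc m)))"
    by blast+
  \<comment> \<open>Scaling by a power of \<open>\<pi>\<close> moves any point into the unit ball, where the finite nets live.\<close>
  define D where "D = (\<Union>k. \<Union>m. (\<lambda>q. inverse \<pi> ^ k * q) ` K m)"
  have "countable D"
    unfolding D_def by (intro countable_UN[OF countableI_type] countable_image countable_finite K(1))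
  moreover have "\<exists>q\<in>D. av (x - q) < r" if "0 < r" for x r
  proof -
    obtain k where z: "av (\<pi> ^ k * x) \<le> 1"
      using av_power_mult_le_1[OF \<pi>] by blast
    define z where "z = \<pi> ^ k * x"
    obtain m where m: "inverse (real (Suc m)) < r * av \<pi> ^ k"
      using reals_Archimedean[of "r * av \<pi> ^ k"] \<pi> \<open>0 < r\<close> by auto
    obtain q where q: "q \<in> K m" "av (q - z) < inverse (Suc m)"
      using K(2)[of m] z unfolding z_def by auto
    have "x - inverse \<pi> ^ k * q = inverse \<pi> ^ k * (z - q)"
      unfolding z_def using \<open>\<pi> \<noteq> 0\<close> by (simp add: field_simps)
    then have "av (x - inverse \<pi> ^ k * q) = inverse (av \<pi>) ^ k * av (q - z)"
      by (simp add: av_mult av_power av_inverse av_diff_commute)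
    also have "\<dots> < inverse (av \<pi>) ^ k * (r * av \<pi> ^ k)"
      using q m \<pi> by (intro mult_strict_left_mono) auto
    also have "\<dots> = r"
      using \<pi> \<open>\<pi> \<noteq> 0\<close> by (simp add: field_simps power_inverse)
    finally show ?thesis
      using q(1) unfolding D_def by blast
  qed
  ultimately show ?thesis
    using that by blast
qed

section \<open>Measurability and integrability of absolute values\<close>

lemma kborel_ball: "{y. av (y - q) < r} \<in> sets (kborel av)"
  unfolding kborel_def by (subst sets_measure_of) (auto intro: sigma_sets.Basic)

lemma space_kborel [simp]: "space (kborel av) = UNIV"
  unfolding kborel_def by (subst space_measure_of) auto

lemma borel_measurable_av_diff:
  fixes av :: "'k::field \<Rightarrow> real"
  assumes loc: "nonarch_local_field av"
    and X: "X \<in> measurable N (kborel av)" and Y: "Y \<in> measurable N (kborel av)"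
  shows "(\<lambda>\<omega>. av (X \<omega> - Y \<omega>)) \<in> borel_measurable N"
  unfolding borel_measurable_iff_less
proof
  fix a :: real
  interpret ultrametric_abs av
    using loc by (rule nonarch_local_field_ultrametric_abs)
  obtain D where D: "countable D" "\<And>x r. 0 < r \<Longrightarrow> \<exists>q\<in>D. av (x - q) < r"
    using nonarch_local_field_separable[OF loc] by blast
  have "{w \<in> space N. av (X w - Y w) < a} =
      (\<Union>q\<in>D. (X -` {y. av (y - q) < a} \<inter> space N) \<inter> (Y -` {y. av (y - q) < a} \<inter> space N))"
  proof (rule set_eqI)
    fix w
    show "w \<in> {w \<in> space N. av (X w - Y w) < a} \<longleftrightarrow>
        w \<in> (\<Union>q\<in>D. (X -` {y. av (y - q) < a} \<inter> space N) \<inter> (Y -` {y. av (y - q) < a} \<inter> space N))"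
      using av_diff_less_iff_common_ball[OF D(2), of "X w" "Y w" a] by blast
  qed
  also have "\<dots> \<in> sets N"
    using D(1) by (intro sets.countable_UN'' sets.Int measurable_sets[OF X kborel_ball]
        measurable_sets[OF Y kborel_ball])
  finally show "{w \<in> space N. av (X w - Y w) < a} \<in> sets N" .
qed

lemma borel_measurable_av:
  assumes "nonarch_local_field av" and "X \<in> measurable N (kborel av)"
  shows "(\<lambda>\<omega>. av (X \<omega>)) \<in> borel_measurable N"
  using borel_measurable_av_diff[OF assms measurable_const[of 0 "kborel av"]] by simp

lemma Linf_subalgebra: "subalgebra M G \<Longrightarrow> Linf M G av \<subseteq> Linf M M av"
  unfolding Linf_def using measurable_from_subalg by blast

lemma integrable_power_bounded:
  fixes S :: "'a \<Rightarrow> real"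
  assumes "finite_measure M" and "S \<in> borel_measurable M" and "AE x in M. \<bar>S x\<bar> \<le> C"
  shows "integrable M (\<lambda>x. S x ^ p)"
proof -
  interpret finite_measure M by fact
  show ?thesis
  proof (rule integrable_const_bound[where B = "C ^ p"])
    show "AE x in M. norm (S x ^ p) \<le> C ^ p"
      using assms(3) by eventually_elim (auto simp: power_abs intro: power_mono)
  qed (use assms(2) in simp)
qed

lemma integrable_av_diff_power:
  fixes av :: "'k::field \<Rightarrow> real"
  assumes loc: "nonarch_local_field av" and "finite_measure M"
    and X: "X \<in> Linf M M av" and W: "W \<in> Linf M M av"
  shows "integrable M (\<lambda>x. av (X x - W x) ^ p)"
proof -
  interpret ultrametric_abs av
    using loc by (rule nonarch_local_field_ultrametric_abs)
  obtain C1 C2 where "AE x in M. av (X x) \<le> C1" "AE x in M. av (W x) \<le> C2"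
    using X W unfolding Linf_def by blast
  then have "AE x in M. \<bar>av (X x - W x)\<bar> \<le> max C1 C2"
  proof eventually_elim
    case (elim x)
    then show ?case
      using av_diff_le_max[of "X x" "W x"] by auto
  qed
  moreover have "(\<lambda>x. av (X x - W x)) \<in> borel_measurable M"
    using X W unfolding Linf_def by (auto intro: borel_measurable_av_diff[OF loc])
  ultimately show ?thesis
    using integrable_power_bounded[OF \<open>finite_measure M\<close>] by blast
qed

lemma integrable_av_power:
  assumes "nonarch_local_field av" and "finite_measure M" and "X \<in> Linf M M av"
  shows "integrable M (\<lambda>x. av (X x) ^ p)"
proof -
  have "(\<lambda>_. 0) \<in> Linf M M av"
    unfolding Linf_def by (auto intro!: exI[of _ "av 0"])
  from integrable_av_diff_power[OF assms this] show ?thesis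
    by simp
qed

section \<open>The stopped \<sigma>-algebra\<close>

lemma stopping_time_natD: "stopping_time_nat M F T \<Longrightarrow> {\<omega> \<in> space M. T \<omega> = n} \<in> sets (F n)"
  unfolding stopping_time_nat_def by blast

lemma space_stopped_sigma [simp]: "space (stopped_sigma M F T) = space M"
  unfolding stopped_sigma_def by (subst space_measure_of) (auto dest: sets.sets_into_space)

lemma sets_stopped_sigma:
  assumes F: "\<And>n. subalgebra M (F n)" and T: "stopping_time_nat M F T"
  shows "sets (stopped_sigma M F T) = {A \<in> sets M. \<forall>n. A \<inter> {\<omega> \<in> space M. T \<omega> = n} \<in> sets (F n)}"
    (is "_ = ?\<A>")
proof -
  have generated: "sets (stopped_sigma M F T) = sigma_sets (space M) ?\<A>"
    unfolding stopped_sigma_def by (rule sets_measure_of) (auto dest: sets.sets_into_space)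
  have "A \<in> ?\<A>" if "A \<in> sigma_sets (space M) ?\<A>" for A
    using that
  proof (induction rule: sigma_sets.induct)
    case (Compl A)
    then have A: "A \<in> sets M" "\<And>n. A \<inter> {\<omega> \<in> space M. T \<omega> = n} \<in> sets (F n)"
      by auto
    have "(space M - A) \<inter> {\<omega> \<in> space M. T \<omega> = n} =
        {\<omega> \<in> space M. T \<omega> = n} - A \<inter> {\<omega> \<in> space M. T \<omega> = n}" for n
      by blast
    then have "(space M - A) \<inter> {\<omega> \<in> space M. T \<omega> = n} \<in> sets (F n)" for n
      using sets.Diff[OF stopping_time_natD[OF T] A(2)] by simp
    with A(1) show ?case
      by blast
  next
    case (Union A)
    then have A: "\<And>i. A i \<in> sets M" "\<And>i n. A i \<inter> {\<omega> \<in> space M. T \<omega> = n} \<in> sets (F n)"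
      by auto
    have "(\<Union>i. A i) \<inter> {\<omega> \<in> space M. T \<omega> = n} = (\<Union>i. A i \<inter> {\<omega> \<in> space M. T \<omega> = n})" for n
      by blast
    moreover have "(\<Union>i. A i \<inter> {\<omega> \<in> space M. T \<omega> = n}) \<in> sets (F n)" for n
      using A(2) by (intro sets.countable_UN) blast
    ultimately show ?case
      using A(1) by auto
  qed auto
  then show ?thesis
    unfolding generated using sigma_sets_superset_generator by blast
qed

lemma subalgebra_stopped_sigma:
  assumes "\<And>n. subalgebra M (F n)" and "stopping_time_nat M F T"
  shows "subalgebra M (stopped_sigma M F T)"
  unfolding subalgebra_def sets_stopped_sigma[OF assms] by auto

lemma stopping_time_level_in_stopped_sigma:
  assumes F: "\<And>n. subalgebra M (F n)" and T: "stopping_time_nat M F T"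
  shows "{\<omega> \<in> space M. T \<omega> = n} \<in> sets (stopped_sigma M F T)"
proof -
  have "{\<omega> \<in> space M. T \<omega> = n} \<inter> {\<omega> \<in> space M. T \<omega> = m} \<in> sets (F m)" for m
  proof (cases "m = n")
    case True
    then show ?thesis
      using stopping_time_natD[OF T, of m] by simp
  next
    case False
    then have "{\<omega> \<in> space M. T \<omega> = n} \<inter> {\<omega> \<in> space M. T \<omega> = m} = {}"
      by blast
    then show ?thesis
      by simp
  qed
  moreover have "{\<omega> \<in> space M. T \<omega> = n} \<in> sets M"
    using stopping_time_natD[OF T, of n] F[of n] unfolding subalgebra_def by blast
  ultimately show ?thesis
    unfolding sets_stopped_sigma[OF F T] by blast
qed

lemma measurable_stopped_process:
  assumes F: "\<And>n. subalgebra M (F n)" and T: "stopping_time_nat M F T"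
    and h: "\<And>n. h n \<in> measurable (F n) N"
  shows "(\<lambda>\<omega>. h (T \<omega>) \<omega>) \<in> measurable (stopped_sigma M F T) N"
proof -
  have space_F [simp]: "space (F n) = space M" for n
    using F unfolding subalgebra_def by blast
  let ?h = "\<lambda>\<omega>. h (T \<omega>) \<omega>"
  have level: "?h -` U \<inter> space M \<inter> {\<omega> \<in> space M. T \<omega> = n} \<in> sets (F n)" if "U \<in> sets N" for U n
  proof -
    have "?h -` U \<inter> space M \<inter> {\<omega> \<in> space M. T \<omega> = n} = (h n -` U \<inter> space (F n)) \<inter> {\<omega> \<in> space M. T \<omega> = n}"
      by auto
    then show ?thesis
      using measurable_sets[OF h that] stopping_time_natD[OF T] by auto
  qed
  have "?h -` U \<inter> space M \<in> sets M" if "U \<in> sets N" for U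
  proof -
    have "?h -` U \<inter> space M = (\<Union>n. ?h -` U \<inter> space M \<inter> {\<omega> \<in> space M. T \<omega> = n})"
      by blast
    also have "\<dots> \<in> sets M"
      using level[OF that] F unfolding subalgebra_def by (intro sets.countable_UN) auto
    finally show ?thesis .
  qed
  with level show ?thesis
    using measurable_space[OF h] by (intro measurableI) (auto simp: sets_stopped_sigma[OF F T])
qed

lemma measurable_stopped_restrict:
  assumes F: "\<And>n. subalgebra M (F n)" and T: "stopping_time_nat M F T"
    and Z: "Z \<in> measurable (stopped_sigma M F T) N" and c: "c \<in> space N"
  shows "(\<lambda>\<omega>. if T \<omega> = n then Z \<omega> else c) \<in> measurable (F n) N"
proof -
  have space_F [simp]: "space (F n) = space M"
    using F unfolding subalgebra_def by blast
  let ?L = "{\<omega> \<in> space M. T \<omega> = n}"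
  have "(\<lambda>\<omega>. if T \<omega> = n then Z \<omega> else c) -` U \<inter> space (F n) \<in> sets (F n)" if U: "U \<in> sets N" for U
  proof -
    have "(\<lambda>\<omega>. if T \<omega> = n then Z \<omega> else c) -` U \<inter> space (F n) =
        (Z -` U \<inter> space M) \<inter> ?L \<union> (if c \<in> U then space M - ?L else {})"
      by (auto split: if_splits)
    moreover have "(Z -` U \<inter> space M) \<inter> ?L \<in> sets (F n)"
      using measurable_sets[OF Z U] unfolding sets_stopped_sigma[OF F T] by auto
    moreover have "space M - ?L \<in> sets (F n)"
      using sets.compl_sets[OF stopping_time_natD[OF T, of n]] by simp
    ultimately show ?thesis
      by auto
  qed
  then show ?thesis
    using measurable_space[OF Z] c by (intro measurableI) auto
qed

lemma Linf_stopped_restrict: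
  assumes F: "\<And>n. subalgebra M (F n)" and T: "stopping_time_nat M F T"
    and Z: "Z \<in> Linf M (stopped_sigma M F T) av"
  shows "(\<lambda>\<omega>. if T \<omega> = n then Z \<omega> else 0) \<in> Linf M (F n) av"
proof -
  obtain C where "AE x in M. av (Z x) \<le> C"
    using Z unfolding Linf_def by blast
  then have "AE x in M. av (if T x = n then Z x else 0) \<le> max C (av 0)"
    by eventually_elim auto
  moreover have "(\<lambda>\<omega>. if T \<omega> = n then Z \<omega> else 0) \<in> measurable (F n) (kborel av)"
    using Z unfolding Linf_def by (intro measurable_stopped_restrict[OF F T]) auto
  ultimately show ?thesis
    unfolding Linf_def by blast
qed

section \<open>Localisation of conditional expectations\<close>

lemma prob_space_sigma_finite_subalgebra:
  "prob_space M \<Longrightarrow> subalgebra M G \<Longrightarrow> sigma_finite_subalgebra M G"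
  by (rule finite_measure_subalgebra_is_sigma_finite)
    (simp add: finite_measure_subalgebra_def finite_measure_subalgebra_axioms_def prob_space_def)

lemma (in sigma_finite_subalgebra) real_cond_exp_local:
  assumes A: "A \<in> sets F" and f: "integrable M f" and g: "integrable M g"
    and eq: "AE x in M. x \<in> A \<longrightarrow> f x = g x"
  shows "AE x in M. x \<in> A \<longrightarrow> real_cond_exp M F f x = real_cond_exp M F g x"
proof -
  have AM: "A \<in> sets M"
    using A subalg unfolding subalgebra_def by blast
  have [measurable]: "f \<in> borel_measurable M" "g \<in> borel_measurable M" "indicator A \<in> borel_measurable F"
    using f g A by auto
  have "AE x in M. real_cond_exp M F (\<lambda>x. indicator A x * f x) x = indicator A x * real_cond_exp M F f x"
    using integrable_real_mult_indicator[OF AM f] by (intro real_cond_exp_mult) (auto simp: mult.commute)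
  moreover have "AE x in M. real_cond_exp M F (\<lambda>x. indicator A x * g x) x = indicator A x * real_cond_exp M F g x"
    using integrable_real_mult_indicator[OF AM g] by (intro real_cond_exp_mult) (auto simp: mult.commute)
  moreover have "AE x in M. real_cond_exp M F (\<lambda>x. indicator A x * f x) x
      = real_cond_exp M F (\<lambda>x. indicator A x * g x) x"
    using eq AM by (intro real_cond_exp_cong) (auto simp: indicator_def)
  ultimately show ?thesis
    by eventually_elim (auto simp: indicator_def)
qed

lemma real_cond_exp_stopped_sigma_indicator:
  fixes n :: nat
  assumes P: "prob_space M" and F: "\<And>n. subalgebra M (F n)" and T: "stopping_time_nat M F T"
    and f: "integrable M f"
  defines "A \<equiv> {\<omega> \<in> space M. T \<omega> = n}"
  shows "AE x in M. real_cond_exp M (stopped_sigma M F T) (\<lambda>x. indicator A x * f x) x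
    = indicator A x * real_cond_exp M (F n) f x"
proof -
  interpret S: sigma_finite_subalgebra M "stopped_sigma M F T"
    using P subalgebra_stopped_sigma[OF F T] by (rule prob_space_sigma_finite_subalgebra)
  interpret Fn: sigma_finite_subalgebra M "F n"
    using P F by (rule prob_space_sigma_finite_subalgebra)
  have A_M: "A \<in> sets M"
    using stopping_time_natD[OF T] F unfolding A_def subalgebra_def by blast
  define g where "g = (\<lambda>\<omega>. indicator A \<omega> * real_cond_exp M (F n) f \<omega>)"
  have "(\<lambda>\<omega>. (\<lambda>m. if m = n then g else (\<lambda>_. 0)) (T \<omega>) \<omega>) \<in> borel_measurable (stopped_sigma M F T)"
    using stopping_time_natD[OF T] by (intro measurable_stopped_process[OF F T]) (simp add: g_def A_def)
  then have g_FT: "g \<in> borel_measurable (stopped_sigma M F T)"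
    by (rule measurable_cong[THEN iffD1, rotated]) (auto simp: g_def A_def)
  have "AE x in M. real_cond_exp M (stopped_sigma M F T) (\<lambda>x. indicator A x * f x) x = g x"
  proof (rule S.real_cond_exp_charact)
    fix B
    assume "B \<in> sets (stopped_sigma M F T)"
    then have BA: "B \<inter> A \<in> sets (F n)"
      unfolding sets_stopped_sigma[OF F T] A_def by blast
    have "(\<integral>x\<in>B. indicator A x * f x \<partial>M) = (\<integral>x\<in>B \<inter> A. f x \<partial>M)"
      unfolding set_lebesgue_integral_def by (intro Bochner_Integration.integral_cong) (auto simp: indicator_def)
    also have "\<dots> = (\<integral>x\<in>B \<inter> A. real_cond_exp M (F n) f x \<partial>M)"
      by (rule Fn.real_cond_exp_intA[OF f BA])
    also have "\<dots> = (\<integral>x\<in>B. g x \<partial>M)"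
      unfolding set_lebesgue_integral_def g_def by (intro Bochner_Integration.integral_cong) (auto simp: indicator_def)
    finally show "(\<integral>x\<in>B. indicator A x * f x \<partial>M) = (\<integral>x\<in>B. g x \<partial>M)" .
  next
    show "integrable M (\<lambda>x. indicator A x * f x)"
      using integrable_real_mult_indicator[OF A_M f] by (simp add: mult.commute)
    show "integrable M g"
      using integrable_real_mult_indicator[OF A_M Fn.real_cond_exp_int(1)[OF f]]
      by (simp add: g_def mult.commute)
  qed (fact g_FT)
  then show ?thesis
    by (simp add: g_def)
qed

lemma real_cond_exp_stopped_sigma:
  assumes P: "prob_space M" and F: "\<And>n. subalgebra M (F n)" and T: "stopping_time_nat M F T"
    and f: "integrable M f"
  shows "AE x in M. T x = n \<longrightarrow> real_cond_exp M (stopped_sigma M F T) f x = real_cond_exp M (F n) f x"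
proof -
  interpret S: sigma_finite_subalgebra M "stopped_sigma M F T"
    using P subalgebra_stopped_sigma[OF F T] by (rule prob_space_sigma_finite_subalgebra)
  define A where "A = {\<omega> \<in> space M. T \<omega> = n}"
  have A_FT: "A \<in> sets (stopped_sigma M F T)"
    unfolding A_def by (rule stopping_time_level_in_stopped_sigma[OF F T])
  then have A_M: "A \<in> sets M"
    using subalgebra_stopped_sigma[OF F T] unfolding subalgebra_def by blast
  have [measurable]: "f \<in> borel_measurable M"
    using f by auto
  have "AE x in M. real_cond_exp M (stopped_sigma M F T) (\<lambda>x. indicator A x * f x) x
      = indicator A x * real_cond_exp M (stopped_sigma M F T) f x"
    using A_FT integrable_real_mult_indicator[OF A_M f]
    by (intro S.real_cond_exp_mult) (auto simp: mult.commute)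
  moreover have "AE x in M. real_cond_exp M (stopped_sigma M F T) (\<lambda>x. indicator A x * f x) x
      = indicator A x * real_cond_exp M (F n) f x"
    unfolding A_def by (rule real_cond_exp_stopped_sigma_indicator[OF P F T f])
  ultimately show ?thesis
    using AE_space by eventually_elim (auto simp: A_def indicator_def)
qed

lemma power_powr_inverse:
  "0 \<le> (s::real) \<Longrightarrow> 0 < p \<Longrightarrow> (s ^ p) powr (1 / real p) = s"
  by (simp add: root_powr_inverse[symmetric] real_root_power_cancel)

lemma cond_esssup_cong:
  "(\<And>p. real_cond_exp M G (\<lambda>x. S x ^ p) \<omega> = real_cond_exp M G' (\<lambda>x. S' x ^ p) \<omega>) \<Longrightarrow>
    cond_esssup M G S \<omega> = cond_esssup M G' S' \<omega>"
  by (simp add: cond_esssup_def)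

lemma (in sigma_finite_subalgebra) cond_esssup_le_const:
  assumes int: "\<And>p. integrable M (\<lambda>x. S x ^ p)"
    and bound: "AE x in M. 0 \<le> S x \<and> S x \<le> C" and "0 \<le> C"
  shows "AE x in M. cond_esssup M F S x \<le> ennreal C"
proof -
  have "AE x in M. \<forall>p. 0 \<le> real_cond_exp M F (\<lambda>x. S x ^ p) x \<and> real_cond_exp M F (\<lambda>x. S x ^ p) x \<le> C ^ p"
    unfolding AE_all_countable
  proof
    fix p
    have "AE x in M. 0 \<le> S x ^ p"
      using bound by eventually_elim auto
    then have "AE x in M. 0 \<le> real_cond_exp M F (\<lambda>x. S x ^ p) x"
      using int[of p] by (intro real_cond_exp_pos) auto
    moreover have "AE x in M. S x ^ p \<le> C ^ p"
      using bound by eventually_elim (auto intro: power_mono)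
    then have "AE x in M. real_cond_exp M F (\<lambda>x. S x ^ p) x \<le> C ^ p"
      by (rule real_cond_exp_le_c[OF int])
    ultimately show "AE x in M. 0 \<le> real_cond_exp M F (\<lambda>x. S x ^ p) x \<and> real_cond_exp M F (\<lambda>x. S x ^ p) x \<le> C ^ p"
      by eventually_elim auto
  qed
  then show ?thesis
  proof eventually_elim
    case (elim x)
    have "ennreal (real_cond_exp M F (\<lambda>x. S x ^ p) x powr (1 / real p)) \<le> ennreal C" if "1 \<le> p" for p
    proof (rule ennreal_leI)
      have "real_cond_exp M F (\<lambda>x. S x ^ p) x powr (1 / real p) \<le> (C ^ p) powr (1 / real p)"
        using elim by (intro powr_mono2) auto
      also have "\<dots> = C"
        using \<open>0 \<le> C\<close> that by (simp add: power_powr_inverse)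
      finally show "real_cond_exp M F (\<lambda>x. S x ^ p) x powr (1 / real p) \<le> C" .
    qed
    then show ?case
      unfolding cond_esssup_def by (auto intro!: SUP_least)
  qed
qed

lemma (in sigma_finite_subalgebra) cond_esssup_eq_self:
  assumes "S \<in> borel_measurable F" and "\<And>p. integrable M (\<lambda>x. S x ^ p)" and "\<And>x. 0 \<le> S x"
  shows "AE x in M. cond_esssup M F S x = ennreal (S x)"
proof -
  note [measurable] = assms(1)
  have "AE x in M. real_cond_exp M F (\<lambda>x. S x ^ p) x = S x ^ p" for p
    by (rule real_cond_exp_F_meas[OF assms(2)]) measurable
  then have "AE x in M. \<forall>p. real_cond_exp M F (\<lambda>x. S x ^ p) x = S x ^ p"
    unfolding AE_all_countable by blast
  then show ?thesis
  proof eventually_elim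
    case (elim x)
    then have "cond_esssup M F S x = (SUP p\<in>{1::nat..}. ennreal (S x))"
      unfolding cond_esssup_def using assms(3) by (intro SUP_cong) (auto simp: power_powr_inverse)
    then show ?case
      by simp
  qed
qed

lemma (in sigma_finite_subalgebra) cond_esssup_local:
  assumes "A \<in> sets F" and "\<And>p. integrable M (\<lambda>x. S x ^ p)" and "\<And>p. integrable M (\<lambda>x. S' x ^ p)"
    and "AE x in M. x \<in> A \<longrightarrow> S x = S' x"
  shows "AE x in M. x \<in> A \<longrightarrow> cond_esssup M F S x = cond_esssup M F S' x"
proof -
  have "AE x in M. x \<in> A \<longrightarrow> S x ^ p = S' x ^ p" for p
    using assms(4) by eventually_elim auto
  then have "AE x in M. x \<in> A \<longrightarrow> real_cond_exp M F (\<lambda>x. S x ^ p) x = real_cond_exp M F (\<lambda>x. S' x ^ p) x" for p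
    by (rule real_cond_exp_local[OF assms(1-3)])
  then have "AE x in M. \<forall>p. x \<in> A \<longrightarrow> real_cond_exp M F (\<lambda>x. S x ^ p) x = real_cond_exp M F (\<lambda>x. S' x ^ p) x"
    unfolding AE_all_countable by blast
  then show ?thesis
    by eventually_elim (auto intro: cond_esssup_cong)
qed

lemma cond_esssup_stopped_sigma:
  assumes "prob_space M" and "\<And>n. subalgebra M (F n)" and "stopping_time_nat M F T"
    and "\<And>p. integrable M (\<lambda>x. S x ^ p)"
  shows "AE x in M. T x = n \<longrightarrow> cond_esssup M (stopped_sigma M F T) S x = cond_esssup M (F n) S x"
proof -
  have "AE x in M. \<forall>p. T x = n \<longrightarrow>
      real_cond_exp M (stopped_sigma M F T) (\<lambda>x. S x ^ p) x = real_cond_exp M (F n) (\<lambda>x. S x ^ p) x"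
    unfolding AE_all_countable using real_cond_exp_stopped_sigma[OF assms(1-3,4)] by blast
  then show ?thesis
    by eventually_elim (auto intro: cond_esssup_cong)
qed


section \<open>Best approximations at a stopping time\<close>

lemma kcond_exp_Linf: "Y \<in> kcond_exp M G av X \<Longrightarrow> Y \<in> Linf M G av"
  unfolding kcond_exp_def by blast

lemma kcond_exp_minimal:
  assumes "Y \<in> kcond_exp M G av X" and "Z \<in> Linf M G av"
  shows "AE x in M. cond_esssup M G (\<lambda>x. av (X x - Y x)) x \<le> cond_esssup M G (\<lambda>x. av (X x - Z x)) x"
proof -
  have "\<forall>Z \<in> Linf M G av. AE x in M. cond_norm M G av (\<lambda>x. X x - Y x) x \<le> cond_norm M G av (\<lambda>x. X x - Z x) x"
    using assms(1) unfolding kcond_exp_def by simp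
  then show ?thesis
    using assms(2) unfolding cond_norm_def by (rule bspec)
qed

lemma kcond_exp_error_le:
  fixes av :: "'k::field \<Rightarrow> real"
  assumes loc: "nonarch_local_field av" and P: "prob_space M" and G: "subalgebra M G"
    and X: "X \<in> Linf M M av" and X_le: "AE x in M. av (X x) \<le> C" and "0 \<le> C"
    and Y: "Y \<in> kcond_exp M G av X"
  shows "AE x in M. cond_esssup M G (\<lambda>x. av (X x - Y x)) x \<le> ennreal C"
proof -
  interpret ultrametric_abs av
    using loc by (rule nonarch_local_field_ultrametric_abs)
  interpret G: sigma_finite_subalgebra M G
    using P G by (rule prob_space_sigma_finite_subalgebra)
  have "(\<lambda>_. 0) \<in> Linf M G av"
    unfolding Linf_def by auto
  from kcond_exp_minimal[OF Y this]
  have "AE x in M. cond_esssup M G (\<lambda>x. av (X x - Y x)) x \<le> cond_esssup M G (\<lambda>x. av (X x)) x"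
    by simp
  moreover have "AE x in M. 0 \<le> av (X x) \<and> av (X x) \<le> C"
    using X_le by eventually_elim simp
  then have "AE x in M. cond_esssup M G (\<lambda>x. av (X x)) x \<le> ennreal C"
    using P by (intro G.cond_esssup_le_const[OF integrable_av_power[OF loc _ X] _ \<open>0 \<le> C\<close>])
      (simp_all add: prob_space_def)
  ultimately show ?thesis
    by eventually_elim (rule order_trans)
qed

lemma kcond_exp_av_le:
  fixes av :: "'k::field \<Rightarrow> real"
  assumes loc: "nonarch_local_field av" and P: "prob_space M" and G: "subalgebra M G"
    and X: "X \<in> Linf M M av" and X_le: "AE x in M. av (X x) \<le> C" and "0 \<le> C"
    and Y: "Y \<in> kcond_exp M G av X"
  shows "AE x in M. av (Y x) \<le> C"
proof -
  interpret ultrametric_abs av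
    using loc by (rule nonarch_local_field_ultrametric_abs)
  interpret G: sigma_finite_subalgebra M G
    using P G by (rule prob_space_sigma_finite_subalgebra)
  have fin: "finite_measure M"
    using P by (simp add: prob_space_def)
  have Y_G: "Y \<in> Linf M G av"
    using Y by (rule kcond_exp_Linf)
  then have Y_M: "Y \<in> Linf M M av"
    using Linf_subalgebra[OF G] by blast
  have Y_meas [measurable]: "(\<lambda>\<omega>. av (Y \<omega>)) \<in> borel_measurable G"
    using Y_G unfolding Linf_def by (auto intro: borel_measurable_av[OF loc])
  define A where "A = {\<omega> \<in> space M. C < av (Y \<omega>)}"
  have A: "A \<in> sets G"
  proof -
    have "{\<omega> \<in> space G. C < av (Y \<omega>)} \<in> sets G"
      by measurable
    then show ?thesis
      using G unfolding A_def subalgebra_def by simp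
  qed
  have "AE x in M. x \<in> A \<longrightarrow> av (X x - Y x) = av (Y x)"
    using X_le by eventually_elim (auto simp: A_def intro: av_diff_eq_right)
  then have on_A: "AE x in M. x \<in> A \<longrightarrow>
      cond_esssup M G (\<lambda>x. av (X x - Y x)) x = cond_esssup M G (\<lambda>x. av (Y x)) x"
    by (rule G.cond_esssup_local[OF A integrable_av_diff_power[OF loc fin X Y_M]
          integrable_av_power[OF loc fin Y_M]])
  have Y_norm: "AE x in M. cond_esssup M G (\<lambda>x. av (Y x)) x = ennreal (av (Y x))"
    by (rule G.cond_esssup_eq_self[OF Y_meas integrable_av_power[OF loc fin Y_M]]) simp
  from kcond_exp_error_le[OF assms] on_A Y_norm AE_space show ?thesis
  proof eventually_elim
    case (elim x)
    show ?case
    proof (cases "x \<in> A")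
      case True
      then have "ennreal (av (Y x)) \<le> ennreal C"
        using elim by simp
      then show ?thesis
        using \<open>0 \<le> C\<close> by simp
    next
      case False
      then show ?thesis
        using elim by (auto simp: A_def)
    qed
  qed
qed

lemma kcond_exp_stopped_le_on_level:
  fixes av :: "'k::field \<Rightarrow> real"
  assumes loc: "nonarch_local_field av" and P: "prob_space M"
    and F: "\<And>n. subalgebra M (F n)" and T: "stopping_time_nat M F T"
    and X: "X \<in> Linf M M av" and Xn: "Xs n \<in> kcond_exp M (F n) av X"
    and Y: "Y \<in> Linf M M av" and Y_eq: "\<And>\<omega>. T \<omega> = n \<Longrightarrow> Y \<omega> = Xs n \<omega>"
    and Z: "Z \<in> Linf M (stopped_sigma M F T) av"
  shows "AE x in M. T x = n \<longrightarrow> cond_norm M (stopped_sigma M F T) av (\<lambda>x. X x - Y x) x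
    \<le> cond_norm M (stopped_sigma M F T) av (\<lambda>x. X x - Z x) x"
proof -
  interpret Fn: sigma_finite_subalgebra M "F n"
    using P F by (rule prob_space_sigma_finite_subalgebra)
  have fin: "finite_measure M"
    using P by (simp add: prob_space_def)
  note int = integrable_av_diff_power[OF loc fin X]
  define L where "L = {\<omega> \<in> space M. T \<omega> = n}"
  have L: "L \<in> sets (F n)"
    unfolding L_def by (rule stopping_time_natD[OF T])
  define Zn where "Zn = (\<lambda>\<omega>. if T \<omega> = n then Z \<omega> else 0)"
  have Zn: "Zn \<in> Linf M (F n) av"
    unfolding Zn_def by (rule Linf_stopped_restrict[OF F T Z])
  have Xn_M: "Xs n \<in> Linf M M av"
    using kcond_exp_Linf[OF Xn] Linf_subalgebra[OF F] by blast
  have Z_M: "Z \<in> Linf M M av"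
    using Z Linf_subalgebra[OF subalgebra_stopped_sigma[OF F T]] by blast
  have Zn_M: "Zn \<in> Linf M M av"
    using Zn Linf_subalgebra[OF F] by blast
  have "AE x in M. T x = n \<longrightarrow> cond_esssup M (stopped_sigma M F T) (\<lambda>x. av (X x - Y x)) x
      = cond_esssup M (F n) (\<lambda>x. av (X x - Y x)) x"
    by (rule cond_esssup_stopped_sigma[OF P F T int[OF Y]])
  moreover have "AE x in M. x \<in> L \<longrightarrow> cond_esssup M (F n) (\<lambda>x. av (X x - Y x)) x
      = cond_esssup M (F n) (\<lambda>x. av (X x - Xs n x)) x"
    by (rule Fn.cond_esssup_local[OF L int[OF Y] int[OF Xn_M]]) (simp add: L_def Y_eq)
  moreover have "AE x in M. cond_esssup M (F n) (\<lambda>x. av (X x - Xs n x)) x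
      \<le> cond_esssup M (F n) (\<lambda>x. av (X x - Zn x)) x"
    by (rule kcond_exp_minimal[OF Xn Zn])
  moreover have "AE x in M. x \<in> L \<longrightarrow> cond_esssup M (F n) (\<lambda>x. av (X x - Zn x)) x
      = cond_esssup M (F n) (\<lambda>x. av (X x - Z x)) x"
    by (rule Fn.cond_esssup_local[OF L int[OF Zn_M] int[OF Z_M]]) (simp add: L_def Zn_def)
  moreover have "AE x in M. T x = n \<longrightarrow> cond_esssup M (stopped_sigma M F T) (\<lambda>x. av (X x - Z x)) x
      = cond_esssup M (F n) (\<lambda>x. av (X x - Z x)) x"
    by (rule cond_esssup_stopped_sigma[OF P F T int[OF Z_M]])
  ultimately show ?thesis
    using AE_space unfolding cond_norm_def by eventually_elim (auto simp: L_def)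
qed

lemma kcond_exp_stopped_process:
  fixes av :: "'k::field \<Rightarrow> real"
  assumes loc: "nonarch_local_field av" and P: "prob_space M"
    and F: "\<And>n. subalgebra M (F n)" and T: "stopping_time_nat M F T"
    and X: "X \<in> Linf M M av" and Xs: "\<And>n. Xs n \<in> kcond_exp M (F n) av X"
  shows "(\<lambda>\<omega>. Xs (T \<omega>) \<omega>) \<in> kcond_exp M (stopped_sigma M F T) av X"
proof -
  define Y where "Y = (\<lambda>\<omega>. Xs (T \<omega>) \<omega>)"
  obtain C where C: "AE x in M. av (X x) \<le> C" "0 \<le> C"
  proof -
    obtain C where "AE x in M. av (X x) \<le> C"
      using X unfolding Linf_def by blast
    then have "AE x in M. av (X x) \<le> max C 0"
      by eventually_elim auto
    then show thesis
      by (rule that) simp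
  qed
  have "AE x in M. \<forall>n. av (Xs n x) \<le> C"
    unfolding AE_all_countable using kcond_exp_av_le[OF loc P F X C Xs] by blast
  then have "AE x in M. av (Y x) \<le> C"
    by eventually_elim (simp add: Y_def)
  moreover have "Xs n \<in> measurable (F n) (kborel av)" for n
    using kcond_exp_Linf[OF Xs[of n]] unfolding Linf_def by blast
  then have "Y \<in> measurable (stopped_sigma M F T) (kborel av)"
    unfolding Y_def by (rule measurable_stopped_process[OF F T])
  ultimately have Y_FT: "Y \<in> Linf M (stopped_sigma M F T) av"
    unfolding Linf_def by blast
  then have Y_M: "Y \<in> Linf M M av"
    using Linf_subalgebra[OF subalgebra_stopped_sigma[OF F T]] by blast
  have "AE x in M. cond_norm M (stopped_sigma M F T) av (\<lambda>x. X x - Y x) x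
      \<le> cond_norm M (stopped_sigma M F T) av (\<lambda>x. X x - Z x) x"
    if Z: "Z \<in> Linf M (stopped_sigma M F T) av" for Z
  proof -
    have "AE x in M. T x = n \<longrightarrow> cond_norm M (stopped_sigma M F T) av (\<lambda>x. X x - Y x) x
        \<le> cond_norm M (stopped_sigma M F T) av (\<lambda>x. X x - Z x) x" for n
      by (rule kcond_exp_stopped_le_on_level[where Xs = Xs, OF loc P F T X Xs[of n] Y_M _ Z]) (simp add: Y_def)
    then have "AE x in M. \<forall>n. T x = n \<longrightarrow> cond_norm M (stopped_sigma M F T) av (\<lambda>x. X x - Y x) x
        \<le> cond_norm M (stopped_sigma M F T) av (\<lambda>x. X x - Z x) x"
      unfolding AE_all_countable by blast
    then show ?thesis
      by eventually_elim auto
  qed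
  with Y_FT have "Y \<in> kcond_exp M (stopped_sigma M F T) av X"
    unfolding kcond_exp_def by blast
  then show ?thesis
    by (simp add: Y_def)
qed

theorem mainTheorem18:
  fixes M :: "'a measure" and av :: "'k::field \<Rightarrow> real"
    and F :: "nat \<Rightarrow> 'a measure" and X :: "'a \<Rightarrow> 'k" and Xs :: "nat \<Rightarrow> 'a \<Rightarrow> 'k"
    and T :: "'a \<Rightarrow> nat"
  assumes "nonarch_local_field av"
    and "prob_space M"
    and "filtration M F"
    and "X \<in> Linf M M av"
    and "\<And>n. Xs n \<in> kcond_exp M (F n) av X"
    and "stopping_time_nat M F T"
  shows "(\<lambda>\<omega>. \<Sum>n\<le>T \<omega>. (if T \<omega> = n then 1 else 0) * Xs n \<omega>)
           \<in> kcond_exp M (stopped_sigma M F T) av X"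
proof -
  have F: "\<And>n. subalgebra M (F n)"
    using assms(3) unfolding filtration_def by blast
  have "(\<lambda>\<omega>. \<Sum>n\<le>T \<omega>. (if T \<omega> = n then 1 else 0) * Xs n \<omega>) = (\<lambda>\<omega>. Xs (T \<omega>) \<omega>)"
    by (simp add: if_distrib[where f = "\<lambda>c. c * _"] cong: if_cong)
  then show ?thesis
    using kcond_exp_stopped_process[OF assms(1,2) F assms(6,4,5)] by simp
qed

end
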